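(* Let $s\geqslant1$. (1) The Markov rule fails in $\mathcal B_s$: there is an evaluated formula $\varphi(x)$ of $L_s$ (free number variable $x$, other parameters replaced by elements of the domains) such that $\mathcal B_s\Vdash\forall x[\varphi(x)\vee\neg\varphi(x)]$ and $\mathcal B_s\Vdash\neg\neg\exists x\varphi(x)$, but not $\mathcal B_s\Vdash\exists x\varphi(x)$. (2) Markov's principle fails in $\mathcal B_s$: for such a $\varphi$, $\mathcal B_s\not\Vdash\forall x[\varphi(x)\vee\neg\varphi(x)]\wedge\neg\neg\exists x\varphi(x)\supset\exists x\varphi(x)$.
   Context: Language $L_s$ ($s\geqslant1$): variables $x,y,\dots$ (type 0), and for $1\leqslant n\leqslant s$: $F^n$ ($n$-functionals), $A^n$ (lawlike), $\mathcal F^n$ (lawless), of type $n$; constants $0,K^n$; function symbols $S,+,\cdot,N^n,Ap^n$ ($Z(t)=Ap(Z,t)$ lowers type by 1; a 1-functional applied to a term is a term); atomic formulas $t=_0\tau$, $Z=_nV$; connectives $\bot,\wedge,\vee,\supset$, quantifiers; $\neg\varphi:=\varphi\supset\bot$; terms for primitive recursive functions/relations (e.g. bounded quantifiers, $<$) are available by the usual definitions. Beth model $\mathcal{B}_s$: path = maximal chain. $a_0=\omega$, $d_0=\{\langle x\rangle:x\in\omega^*\}$ ordered by extension ($\langle x\rangle\preccurlyeq_0\langle y\rangle$ iff $y$ is an initial segment of $x$). For $k\geqslant1$: $a_k$ = partial $f:d_{k-1}\times\omega\dashrightarrow a_{k-1}$, monotonic ($y\preccurlyeq_{k-1}x\Rightarrow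 f(x,\cdot)\subseteq f(y,\cdot)$) and complete (along every path of $d_{k-1}$ the union of $f(x,\cdot)$ is total); $d_k$ = tuples $\langle x_0,\dots,x_k\rangle$ of sequences of common length $m=lh$ with $x_i\in a_i^{(m)}$, ordered componentwise by extension. Nodes $M=d_{s-1}$, root $\varepsilon=\langle\langle\rangle,\dots,\langle\rangle\rangle$, $\bar\alpha(k)=\langle\alpha_0,\dots,\alpha_{k-1}\rangle$. Domains $\omega$, $a_k$, $b_k=\{f\in a_k:f(\text{root},\cdot)\text{ total}\}$, $l_k=\{\nu_k(\xi)\}$ with $\xi:\omega\times a_{k-1}\to a_{k-1}$, all $\xi(n,\cdot)$ bijective, $\nu_k(\xi)(x,n)=\xi(n,\langle\langle x\rangle_{k-1}\rangle_n)$ for $n<lh(x)$, else undefined. $\widehat K^1(x,n)=0$, $\widehat K^{k+1}(x,n)=\widehat K^k$; usual $0,S,+,\cdot$; $N^k\mapsto S^k$ ($S^0(x)=x+1$, $S^{n+1}(f)=S^n\circ f$); at node $\alpha$, $Ap^k(f,n)=f(\bar\alpha(k),n)$. $Val(\alpha,Z=V)=T$ iff both values at $\alpha$ defined and equal. Beth forcing: atomic, $\vee$, $\exists$ require every path through $\alpha$ to meet a node where the valuation holds / a disjunct / an instance is forced; $\supset$: every later node (including $\alpha$) forcing the antecedent forces the consequent; $\wedge,\forall$ pointwise; $\bot$ never forced; $\mathcal B_s\Vdash\varphi$ iff $\varepsilon\Vdash\varphi$. *)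

theory Defs
  imports Main "HOL-Library.Sublist"
begin

text \<open>Sorts of variables: number variables (type 0), n-functionals F^n (ranging over a_n),
  lawlike A^n (ranging over b_n), lawless (ranging over l_n).\<close>
datatype sort = SNum | SFun nat | SLawlike nat | SLawless nat
datatype var = V sort nat

datatype trm =
    Var var
  | Zero
  | Kc nat
  | Sc trm
  | Pl trm trm
  | Tm trm trm
  | Nc nat trm
  | Ap nat trm trm

datatype fm =
    Bot
  | Eq nat trm trm
  | Conj fm fm
  | Disj fm fm
  | Imp fm fm
  | All var fm
  | Ex var fm

definition Neg :: "fm \<Rightarrow> fm" where "Neg \<phi> = Imp \<phi> Bot"

definition lvl_ok :: "nat \<Rightarrow> nat \<Rightarrow> bool" where
  "lvl_ok s n \<longleftrightarrow> 1 \<le> n \<and> n \<le> s"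

fun var_ok :: "nat \<Rightarrow> var \<Rightarrow> bool" where
  "var_ok s (V SNum _) = True"
| "var_ok s (V (SFun n) _) = lvl_ok s n"
| "var_ok s (V (SLawlike n) _) = lvl_ok s n"
| "var_ok s (V (SLawless n) _) = lvl_ok s n"

fun vtype :: "var \<Rightarrow> nat" where
  "vtype (V SNum _) = 0"
| "vtype (V (SFun n) _) = n"
| "vtype (V (SLawlike n) _) = n"
| "vtype (V (SLawless n) _) = n"

primrec ty :: "nat \<Rightarrow> trm \<Rightarrow> nat option" where
  "ty s (Var v) = (if var_ok s v then Some (vtype v) else None)"
| "ty s Zero = Some 0"
| "ty s (Kc n) = (if lvl_ok s n then Some n else None)"
| "ty s (Sc t) = (if ty s t = Some 0 then Some 0 else None)"
| "ty s (Pl t r) = (if ty s t = Some 0 \<and> ty s r = Some 0 then Some 0 else None)"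
| "ty s (Tm t r) = (if ty s t = Some 0 \<and> ty s r = Some 0 then Some 0 else None)"
| "ty s (Nc n t) = (if lvl_ok s n \<and> ty s t = Some n then Some n else None)"
| "ty s (Ap n Z t) = (if lvl_ok s n \<and> ty s Z = Some n \<and> ty s t = Some 0 then Some (n - 1) else None)"

primrec wf_fm :: "nat \<Rightarrow> fm \<Rightarrow> bool" where
  "wf_fm s Bot = True"
| "wf_fm s (Eq n t r) = (ty s t = Some n \<and> ty s r = Some n)"
| "wf_fm s (Conj \<phi> \<psi>) = (wf_fm s \<phi> \<and> wf_fm s \<psi>)"
| "wf_fm s (Disj \<phi> \<psi>) = (wf_fm s \<phi> \<and> wf_fm s \<psi>)"
| "wf_fm s (Imp \<phi> \<psi>) = (wf_fm s \<phi> \<and> wf_fm s \<psi>)"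
| "wf_fm s (All v \<phi>) = (var_ok s v \<and> wf_fm s \<phi>)"
| "wf_fm s (Ex v \<phi>) = (var_ok s v \<and> wf_fm s \<phi>)"

text \<open>The universe is a type 'u with an injection num of the natural numbers (a_0 = omega)
  and an application map app: app u x n is the (partial) value of the functional u at
  node x and argument n.  Nodes (elements of d_k) are lists of k+1 sequences.\<close>

text \<open>ext y x: y extends x componentwise, i.e. y is later than x (y \<preccurlyeq> x).\<close>
definition ext :: "'a list list \<Rightarrow> 'a list list \<Rightarrow> bool" where
  "ext y x \<longleftrightarrow> length y = length x \<and> (\<forall>i<length x. prefix (x ! i) (y ! i))"

text \<open>d_k built from the list [a_0,...,a_k].\<close>
definition Dset :: "'u set list \<Rightarrow> 'u list list set" where
  "Dset As = {x. length x = length As \<and>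
      (\<exists>m. \<forall>i<length As. length (x ! i) = m \<and> set (x ! i) \<subseteq> As ! i)}"

definition is_chain :: "'u list list set \<Rightarrow> 'u list list set \<Rightarrow> bool" where
  "is_chain D P \<longleftrightarrow> P \<subseteq> D \<and> (\<forall>x\<in>P. \<forall>y\<in>P. ext x y \<or> ext y x)"

definition is_path :: "'u list list set \<Rightarrow> 'u list list set \<Rightarrow> bool" where
  "is_path D P \<longleftrightarrow> is_chain D P \<and> (\<forall>Q. is_chain D Q \<and> P \<subseteq> Q \<longrightarrow> Q = P)"

definition adm :: "'u list list set \<Rightarrow> 'u set \<Rightarrow> ('u list list \<Rightarrow> nat \<Rightarrow> 'u option) \<Rightarrow> bool" where
  "adm D Aprev g \<longleftrightarrow>
     (\<forall>x n v. g x n = Some v \<longrightarrow> x \<in> D \<and> v \<in> Aprev) \<and>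
     (\<forall>x y n v. x \<in> D \<and> y \<in> D \<and> ext y x \<and> g x n = Some v \<longrightarrow> g y n = Some v) \<and>
     (\<forall>P. is_path D P \<longrightarrow> (\<forall>n. \<exists>x\<in>P. g x n \<noteq> None))"

primrec Alist :: "(nat \<Rightarrow> 'u) \<Rightarrow> ('u \<Rightarrow> 'u list list \<Rightarrow> nat \<Rightarrow> 'u option) \<Rightarrow> nat \<Rightarrow> 'u set list" where
  "Alist num app 0 = [range num]"
| "Alist num app (Suc k) = Alist num app k @
     [{u. adm (Dset (Alist num app k)) (last (Alist num app k)) (app u)}]"

definition Adom :: "(nat \<Rightarrow> 'u) \<Rightarrow> ('u \<Rightarrow> 'u list list \<Rightarrow> nat \<Rightarrow> 'u option) \<Rightarrow> nat \<Rightarrow> 'u set" where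
  "Adom num app k = last (Alist num app k)"

definition Dnodes :: "(nat \<Rightarrow> 'u) \<Rightarrow> ('u \<Rightarrow> 'u list list \<Rightarrow> nat \<Rightarrow> 'u option) \<Rightarrow> nat \<Rightarrow> 'u list list set" where
  "Dnodes num app k = Dset (Alist num app k)"

text \<open>The universe faithfully represents the hierarchy up to level s: numbers are represented
  injectively, every monotonic complete partial function of level k+1 (k < s) is represented,
  and representations are extensional (unique).\<close>
definition full_universe :: "nat \<Rightarrow> (nat \<Rightarrow> 'u) \<Rightarrow> ('u \<Rightarrow> 'u list list \<Rightarrow> nat \<Rightarrow> 'u option) \<Rightarrow> bool" where
  "full_universe s num app \<longleftrightarrow>
     inj num \<and>
     (\<forall>k<s. \<forall>g. adm (Dnodes num app k) (Adom num app k) g \<longrightarrow> (\<exists>u. app u = g)) \<and>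
     (\<forall>k\<in>{1..s}. \<forall>u\<in>Adom num app k. \<forall>v\<in>Adom num app k. app u = app v \<longrightarrow> u = v)"

definition Blaw :: "(nat \<Rightarrow> 'u) \<Rightarrow> ('u \<Rightarrow> 'u list list \<Rightarrow> nat \<Rightarrow> 'u option) \<Rightarrow> nat \<Rightarrow> 'u set" where
  "Blaw num app k = {u \<in> Adom num app k. \<forall>n. app u (replicate k []) n \<noteq> None}"

text \<open>l_k: lawless domain, nu_k(xi)(x,n) = xi(n, (x_{k-1})_n) for n < lh(x).\<close>
definition Llaw :: "(nat \<Rightarrow> 'u) \<Rightarrow> ('u \<Rightarrow> 'u list list \<Rightarrow> nat \<Rightarrow> 'u option) \<Rightarrow> nat \<Rightarrow> 'u set" where
  "Llaw num app k = {u \<in> Adom num app k. \<exists>\<xi> :: nat \<Rightarrow> 'u \<Rightarrow> 'u.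
      (\<forall>n. bij_betw (\<xi> n) (Adom num app (k - 1)) (Adom num app (k - 1))) \<and>
      app u = (\<lambda>x n. if x \<in> Dnodes num app (k - 1) \<and> n < length (hd x)
                      then Some (\<xi> n (x ! (k - 1) ! n)) else None)}"

text \<open>Interpretation of K^k (with Khat 0 = 0 so that Khat 1 (x,n) = 0).\<close>
primrec Khat :: "(nat \<Rightarrow> 'u) \<Rightarrow> ('u \<Rightarrow> 'u list list \<Rightarrow> nat \<Rightarrow> 'u option) \<Rightarrow> nat \<Rightarrow> 'u" where
  "Khat num app 0 = num 0"
| "Khat num app (Suc k) =
     (SOME u. app u = (\<lambda>x n. if x \<in> Dnodes num app k then Some (Khat num app k) else None))"

primrec Sfun :: "(nat \<Rightarrow> 'u) \<Rightarrow> ('u \<Rightarrow> 'u list list \<Rightarrow> nat \<Rightarrow> 'u option) \<Rightarrow> nat \<Rightarrow> 'u \<Rightarrow> 'u" where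
  "Sfun num app 0 u = num (Suc (inv num u))"
| "Sfun num app (Suc k) u =
     (SOME v. app v = (\<lambda>x n. map_option (Sfun num app k) (app u x n)))"

primrec ev :: "(nat \<Rightarrow> 'u) \<Rightarrow> ('u \<Rightarrow> 'u list list \<Rightarrow> nat \<Rightarrow> 'u option) \<Rightarrow>
    'u list list \<Rightarrow> (var \<Rightarrow> 'u) \<Rightarrow> trm \<Rightarrow> 'u option" where
  "ev num app \<alpha> \<sigma> (Var v) = Some (\<sigma> v)"
| "ev num app \<alpha> \<sigma> Zero = Some (num 0)"
| "ev num app \<alpha> \<sigma> (Kc k) = Some (Khat num app k)"
| "ev num app \<alpha> \<sigma> (Sc t) = map_option (\<lambda>u. num (Suc (inv num u))) (ev num app \<alpha> \<sigma> t)"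
| "ev num app \<alpha> \<sigma> (Pl t r) = (case (ev num app \<alpha> \<sigma> t, ev num app \<alpha> \<sigma> r) of
      (Some a, Some b) \<Rightarrow> Some (num (inv num a + inv num b)) | _ \<Rightarrow> None)"
| "ev num app \<alpha> \<sigma> (Tm t r) = (case (ev num app \<alpha> \<sigma> t, ev num app \<alpha> \<sigma> r) of
      (Some a, Some b) \<Rightarrow> Some (num (inv num a * inv num b)) | _ \<Rightarrow> None)"
| "ev num app \<alpha> \<sigma> (Nc k t) = map_option (Sfun num app k) (ev num app \<alpha> \<sigma> t)"
| "ev num app \<alpha> \<sigma> (Ap k Z t) = (case (ev num app \<alpha> \<sigma> Z, ev num app \<alpha> \<sigma> t) of
      (Some f, Some m) \<Rightarrow> app f (take k \<alpha>) (inv num m) | _ \<Rightarrow> None)"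

fun vdom :: "(nat \<Rightarrow> 'u) \<Rightarrow> ('u \<Rightarrow> 'u list list \<Rightarrow> nat \<Rightarrow> 'u option) \<Rightarrow> var \<Rightarrow> 'u set" where
  "vdom num app (V SNum _) = range num"
| "vdom num app (V (SFun n) _) = Adom num app n"
| "vdom num app (V (SLawlike n) _) = Blaw num app n"
| "vdom num app (V (SLawless n) _) = Llaw num app n"

definition env_ok :: "nat \<Rightarrow> (nat \<Rightarrow> 'u) \<Rightarrow> ('u \<Rightarrow> 'u list list \<Rightarrow> nat \<Rightarrow> 'u option) \<Rightarrow> (var \<Rightarrow> 'u) \<Rightarrow> bool" where
  "env_ok s num app \<sigma> \<longleftrightarrow> (\<forall>v. var_ok s v \<longrightarrow> \<sigma> v \<in> vdom num app v)"

definition Mnodes :: "nat \<Rightarrow> (nat \<Rightarrow> 'u) \<Rightarrow> ('u \<Rightarrow> 'u list list \<Rightarrow> nat \<Rightarrow> 'u option) \<Rightarrow> 'u list list set" where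
  "Mnodes s num app = Dnodes num app (s - 1)"

definition root :: "nat \<Rightarrow> 'u list list" where
  "root s = replicate s []"

definition bar :: "nat \<Rightarrow> (nat \<Rightarrow> 'u) \<Rightarrow> ('u \<Rightarrow> 'u list list \<Rightarrow> nat \<Rightarrow> 'u option) \<Rightarrow>
    'u list list \<Rightarrow> ('u list list \<Rightarrow> bool) \<Rightarrow> bool" where
  "bar s num app \<alpha> Q \<longleftrightarrow>
     (\<forall>P. is_path (Mnodes s num app) P \<and> \<alpha> \<in> P \<longrightarrow> (\<exists>\<beta>\<in>P. ext \<beta> \<alpha> \<and> Q \<beta>))"

primrec frc :: "nat \<Rightarrow> (nat \<Rightarrow> 'u) \<Rightarrow> ('u \<Rightarrow> 'u list list \<Rightarrow> nat \<Rightarrow> 'u option) \<Rightarrow>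
    fm \<Rightarrow> 'u list list \<Rightarrow> (var \<Rightarrow> 'u) \<Rightarrow> bool" where
  "frc s num app Bot \<alpha> \<sigma> = False"
| "frc s num app (Eq n t r) \<alpha> \<sigma> =
     bar s num app \<alpha> (\<lambda>\<beta>. \<exists>a. ev num app \<beta> \<sigma> t = Some a \<and> ev num app \<beta> \<sigma> r = Some a)"
| "frc s num app (Conj \<phi> \<psi>) \<alpha> \<sigma> = (frc s num app \<phi> \<alpha> \<sigma> \<and> frc s num app \<psi> \<alpha> \<sigma>)"
| "frc s num app (Disj \<phi> \<psi>) \<alpha> \<sigma> =
     bar s num app \<alpha> (\<lambda>\<beta>. frc s num app \<phi> \<beta> \<sigma> \<or> frc s num app \<psi> \<beta> \<sigma>)"
| "frc s num app (Imp \<phi> \<psi>) \<alpha> \<sigma> =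
     (\<forall>\<beta>\<in>Mnodes s num app. ext \<beta> \<alpha> \<longrightarrow> frc s num app \<phi> \<beta> \<sigma> \<longrightarrow> frc s num app \<psi> \<beta> \<sigma>)"
| "frc s num app (All v \<phi>) \<alpha> \<sigma> = (\<forall>d\<in>vdom num app v. frc s num app \<phi> \<alpha> (\<sigma>(v := d)))"
| "frc s num app (Ex v \<phi>) \<alpha> \<sigma> =
     bar s num app \<alpha> (\<lambda>\<beta>. \<exists>d\<in>vdom num app v. frc s num app \<phi> \<beta> (\<sigma>(v := d)))"

end

theory Submission
  imports Defs
begin

(* The counterexample is the formula  phi(x) := F(x) = 1,  where F is evaluated by the
   "generic" 1-functional g that at a node beta returns the x-th entry of the first
   coordinate of beta (and is undefined beyond the length of beta).  Along the nodes the
   first coordinate is an arbitrary finite sequence of numbers, so phi(n) is forced at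
   beta exactly when beta already records a 1 at position n, and this is decided as soon
   as the sequence has length > n.  Hence
     - phi(x) or not phi(x) is forced (every path eventually decides position x),
     - not not exists x phi(x) is forced (every node extends by appending a 1),
     - exists x phi(x) is not forced at the root (the path of constant 0 sequences). *)

section \<open>Nodes and paths\<close>

lemma ext_refl: "ext x x"
  by (simp add: ext_def)

lemma ext_trans: "ext z y \<Longrightarrow> ext y x \<Longrightarrow> ext z x"
  by (auto simp: ext_def intro: prefix_order.order_trans)

lemma prefix_nth: "prefix xs ys \<Longrightarrow> n < length xs \<Longrightarrow> xs ! n = ys ! n"
  by (auto simp: prefix_def nth_append)

lemma Dset_length: "x \<in> Dset As \<Longrightarrow> i < length As \<Longrightarrow> length (x ! i) = length (x ! 0)"
  unfolding Dset_def by (cases "length As") auto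

lemma Dset_coord: "x \<in> Dset As \<Longrightarrow> i < length As \<Longrightarrow> set (x ! i) \<subseteq> As ! i"
  unfolding Dset_def by auto

lemma ext_length_mono:
  "x \<in> Dset As \<Longrightarrow> ext y x \<Longrightarrow> 0 < length As \<Longrightarrow> length (x ! 0) \<le> length (y ! 0)"
  unfolding ext_def Dset_def by (auto intro: prefix_length_le)

lemma ext_same_length_eq:
  assumes "x \<in> Dset As" "y \<in> Dset As" "ext y x" "length (x ! 0) = length (y ! 0)"
  shows "y = x"
proof (rule nth_equalityI)
  show "length y = length x" using assms(3) by (simp add: ext_def)
  fix i assume "i < length y"
  hence i: "i < length x" "i < length As" using assms(1,3) by (auto simp: ext_def Dset_def)
  have "prefix (x ! i) (y ! i)" using assms(3) i by (simp add: ext_def)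
  moreover have "length (x ! i) = length (y ! i)"
    using Dset_length[OF assms(1) i(2)] Dset_length[OF assms(2) i(2)] assms(4) by simp
  ultimately show "y ! i = x ! i" by (auto simp: prefix_def)
qed

lemma root_in_Dset: "replicate (length As) [] \<in> Dset As"
  unfolding Dset_def by auto

lemma path_subset: "is_path D P \<Longrightarrow> P \<subseteq> D"
  by (simp add: is_path_def is_chain_def)

lemma path_nonempty: "is_path D P \<Longrightarrow> r \<in> D \<Longrightarrow> P \<noteq> {}"
  unfolding is_path_def is_chain_def
  by (metis empty_iff empty_subsetI insert_subset singletonD ext_refl)

definition extnode :: "'u list list \<Rightarrow> (nat \<Rightarrow> 'u) \<Rightarrow> 'u list list" where
  "extnode t c = map (\<lambda>i. t ! i @ [c i]) [0..<length t]"

lemma extnode: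
  assumes "t \<in> Dset As" "\<forall>i<length As. c i \<in> As ! i"
  shows "extnode t c \<in> Dset As" "ext (extnode t c) t"
    "0 < length As \<Longrightarrow> extnode t c ! 0 = t ! 0 @ [c 0]"
proof -
  from assms(1) obtain m where t: "length t = length As"
      "\<forall>i<length As. length (t ! i) = m \<and> set (t ! i) \<subseteq> As ! i"
    unfolding Dset_def by auto
  show "extnode t c \<in> Dset As" unfolding Dset_def extnode_def
    using t assms(2) by (auto intro!: exI[of _ "Suc m"])
  show "ext (extnode t c) t" unfolding ext_def extnode_def by auto
  show "0 < length As \<Longrightarrow> extnode t c ! 0 = t ! 0 @ [c 0]" unfolding extnode_def using t by simp
qed

definition pick :: "'u set list \<Rightarrow> nat \<Rightarrow> 'u" where
  "pick As i = (SOME a. a \<in> As ! i)"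

lemma pick: "\<forall>i<length As. As ! i \<noteq> {} \<Longrightarrow> \<forall>i<length As. pick As i \<in> As ! i"
  by (auto simp: pick_def some_in_eq)

text \<open>A path has a largest node only if it can be extended; hence paths are unbounded.\<close>
lemma path_unbounded:
  assumes P: "is_path (Dset As) P" and L: "0 < length As" and ne: "\<forall>i<length As. As ! i \<noteq> {}"
  shows "\<exists>x\<in>P. m \<le> length (x ! 0)"
proof (rule ccontr)
  assume "\<not> (\<exists>x\<in>P. m \<le> length (x ! 0))"
  hence bounded: "\<forall>x\<in>P. length (x ! 0) < m" by auto
  let ?S = "(\<lambda>x. length (x ! 0)) ` P"
  have "?S \<subseteq> {..<m}" using bounded by auto
  hence fin: "finite ?S" using finite_subset by blast
  have sub: "P \<subseteq> Dset As" using P by (rule path_subset)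
  have "?S \<noteq> {}" using path_nonempty[OF P root_in_Dset] by simp
  hence "Max ?S \<in> ?S" using fin by (rule Max_in[rotated])
  then obtain t where tP: "t \<in> P" and tmax: "length (t ! 0) = Max ?S" by auto
  have top: "ext t x" if "x \<in> P" for x
  proof -
    have "ext t x \<or> ext x t" using P that tP by (auto simp: is_path_def is_chain_def)
    moreover have "length (x ! 0) \<le> length (t ! 0)" using tmax fin that by simp
    moreover have "x \<in> Dset As" "t \<in> Dset As" using sub that tP by auto
    ultimately show ?thesis
      using ext_length_mono[of t As x] ext_same_length_eq[of t As x] ext_refl[of t] L by fastforce
  qed
  let ?t' = "extnode t (pick As)"
  note E = extnode[OF subsetD[OF sub tP] pick[OF ne]]
  have "\<forall>x\<in>P. ext ?t' x" using top ext_trans[OF E(2)] by blast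
  hence "is_chain (Dset As) (insert ?t' P)"
    using P E(1) ext_refl unfolding is_path_def is_chain_def by blast
  hence "insert ?t' P = P" using P subset_insertI unfolding is_path_def by blast
  hence "?t' \<in> P" by blast
  hence "length (?t' ! 0) \<le> length (t ! 0)" using tmax fin by simp
  thus False using E(3)[OF L] by simp
qed

definition nodeseq :: "nat \<Rightarrow> (nat \<Rightarrow> nat \<Rightarrow> 'a) \<Rightarrow> nat \<Rightarrow> 'a list list" where
  "nodeseq L W m = map (\<lambda>i. map (W i) [0..<m]) [0..<L]"

lemma nodeseq_ext:
  assumes "m \<le> m'" shows "ext (nodeseq L W m') (nodeseq L W m)"
proof -
  have "map (W i) [0..<m] = take m (map (W i) [0..<m'])" for i using assms by (simp add: take_map)
  thus ?thesis unfolding ext_def nodeseq_def by (simp add: take_is_prefix)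
qed

lemma nodeseq_path:
  assumes L: "0 < length As" and W: "\<forall>i<length As. \<forall>j. W i j \<in> As ! i"
  shows "is_path (Dset As) (range (nodeseq (length As) W))"
proof -
  let ?N = "nodeseq (length As) W"
  have inD: "?N m \<in> Dset As" for m
    using W unfolding Dset_def nodeseq_def by (auto intro!: exI[of _ m])
  have ch: "is_chain (Dset As) (range ?N)"
    unfolding is_chain_def
  proof (intro conjI ballI)
    show "range ?N \<subseteq> Dset As" using inD by blast
    fix x y assume "x \<in> range ?N" "y \<in> range ?N"
    then obtain a b where "x = ?N a" "y = ?N b" by blast
    thus "ext x y \<or> ext y x" using nodeseq_ext nle_le by metis
  qed
  have "y \<in> range ?N" if Q: "is_chain (Dset As) Q" "range ?N \<subseteq> Q" "y \<in> Q" for Q y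
  proof -
    have yD: "y \<in> Dset As" using Q by (auto simp: is_chain_def)
    have "ext y (?N (length (y ! 0))) \<or> ext (?N (length (y ! 0))) y"
      using Q unfolding is_chain_def by blast
    moreover have "length (?N m ! 0) = m" for m using L by (simp add: nodeseq_def)
    ultimately have "y = ?N (length (y ! 0))"
      using ext_same_length_eq[OF inD yD] ext_same_length_eq[OF yD inD] by metis
    thus ?thesis by blast
  qed
  with ch show ?thesis unfolding is_path_def by blast
qed

text \<open>Every node lies on a path: continue its coordinates with chosen elements.\<close>
lemma exists_path:
  assumes x: "x \<in> Dset As" and L: "0 < length As" and ne: "\<forall>i<length As. As ! i \<noteq> {}"
  shows "\<exists>P. is_path (Dset As) P \<and> x \<in> P"
proof -
  define W where "W = (\<lambda>i j. if j < length (x ! i) then x ! i ! j else pick As i)"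
  have W: "\<forall>i<length As. \<forall>j. W i j \<in> As ! i"
    using Dset_coord[OF x] pick[OF ne] unfolding W_def by (auto dest: nth_mem)
  have "nodeseq (length As) W (length (x ! 0)) = x"
    using x Dset_length[OF x] unfolding nodeseq_def W_def Dset_def
    by (auto intro!: nth_equalityI)
  thus ?thesis using nodeseq_path[OF L W] by (metis rangeI)
qed

section \<open>The hierarchy a_k in a full universe\<close>

lemma length_Alist: "length (Alist num app k) = Suc k"
  by (induct k) auto

lemma Adom_Suc: "Adom num app (Suc k) = {u. adm (Dnodes num app k) (Adom num app k) (app u)}"
  by (simp add: Adom_def Dnodes_def)

lemma Alist_nth: "i \<le> k \<Longrightarrow> Alist num app k ! i = Adom num app i"
proof (induct k arbitrary: i)
  case 0 thus ?case by (simp add: Adom_def)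
next
  case (Suc k)
  thus ?case
    by (cases "i \<le> k") (auto simp: nth_append length_Alist Adom_def Dnodes_def le_Suc_eq)
qed

lemma full_universe_represents:
  assumes "full_universe s num app" "k < s" "adm (Dnodes num app k) (Adom num app k) g"
  shows "\<exists>u\<in>Adom num app (Suc k). app u = g"
  using assms by (auto simp: full_universe_def Adom_Suc)

lemma adm_const:
  assumes "c \<in> Adom num app k"
  shows "adm (Dnodes num app k) (Adom num app k) (\<lambda>x n. if x \<in> Dnodes num app k then Some c else None)"
  unfolding adm_def
proof (intro conjI allI impI)
  fix P n assume P: "is_path (Dnodes num app k) P"
  have "replicate (length (Alist num app k)) [] \<in> Dnodes num app k"
    by (simp add: Dnodes_def root_in_Dset)
  then obtain x where "x \<in> P" using path_nonempty[OF P] by blast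
  thus "\<exists>x\<in>P. (if x \<in> Dnodes num app k then Some c else None) \<noteq> None"
    using path_subset[OF P] by auto
qed (use assms in \<open>auto split: if_splits\<close>)

lemma Adom_nonempty:
  assumes "full_universe s num app" "k \<le> s"
  shows "Adom num app k \<noteq> {}"
  using assms(2)
proof (induct k)
  case 0 thus ?case by (simp add: Adom_def)
next
  case (Suc k)
  then obtain c where "c \<in> Adom num app k" by auto
  thus ?case using full_universe_represents[OF assms(1) _ adm_const[of c num app k]] Suc(2) by force
qed

lemma levels_nonempty:
  "full_universe s num app \<Longrightarrow> k \<le> s \<Longrightarrow> \<forall>i<length (Alist num app k). Alist num app k ! i \<noteq> {}"
  using Adom_nonempty[of s num app] by (simp add: length_Alist Alist_nth)

text \<open>It is the lawless sequence \<open>\<nu>_(k+1)(\<xi>)\<close> with \<open>\<xi>\<close> the identity.\<close>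
definition gen :: "(nat \<Rightarrow> 'u) \<Rightarrow> ('u \<Rightarrow> 'u list list \<Rightarrow> nat \<Rightarrow> 'u option) \<Rightarrow> nat \<Rightarrow>
    'u list list \<Rightarrow> nat \<Rightarrow> 'u option" where
  "gen num app k = (\<lambda>x n. if x \<in> Dnodes num app k \<and> n < length (hd x) then Some (x ! k ! n) else None)"

lemma gen_at_node:
  assumes "x \<in> Dnodes num app k"
  shows "gen num app k x n = (if n < length (x ! 0) then Some (x ! k ! n) else None)"
proof -
  have "x \<noteq> []" using assms by (auto simp: Dnodes_def Dset_def length_Alist)
  thus ?thesis using assms by (simp add: gen_def hd_conv_nth)
qed

text \<open>The generic functional is admissible: it takes values in \<open>a_k\<close>, it is monotone because
  later nodes extend the coordinates, and it is complete because paths are unbounded.\<close>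
lemma adm_gen:
  assumes ne: "\<forall>i<length (Alist num app k). Alist num app k ! i \<noteq> {}"
  shows "adm (Dnodes num app k) (Adom num app k) (gen num app k)"
proof -
  let ?As = "Alist num app k"
  have L: "0 < length ?As" "k < length ?As" by (auto simp: length_Alist)
  have len: "length (x ! k) = length (x ! 0)" if "x \<in> Dnodes num app k" for x
    using Dset_length[of x ?As k] that L by (simp add: Dnodes_def)
  have "x \<in> Dnodes num app k \<and> v \<in> Adom num app k" if "gen num app k x n = Some v" for x n v
  proof -
    have x: "x \<in> Dnodes num app k" using that by (simp add: gen_def split: if_splits)
    hence "n < length (x ! k)" "v = x ! k ! n" using that len by (auto simp: gen_at_node split: if_splits)
    hence "v \<in> set (x ! k)" by simp
    thus ?thesis using x Dset_coord[of x ?As k] L by (auto simp: Dnodes_def Alist_nth)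
  qed
  moreover have "gen num app k y n = Some v"
    if x: "x \<in> Dnodes num app k" and y: "y \<in> Dnodes num app k" and e: "ext y x"
      and g: "gen num app k x n = Some v" for x y n v
  proof -
    have n: "n < length (x ! 0)" and v: "v = x ! k ! n" using g x by (auto simp: gen_at_node split: if_splits)
    have "prefix (x ! 0) (y ! 0)" "prefix (x ! k) (y ! k)" using e x L by (auto simp: ext_def Dnodes_def Dset_def)
    thus ?thesis using prefix_nth prefix_length_le n v len[OF x] y
      by (fastforce simp: gen_at_node)
  qed
  moreover have "\<exists>x\<in>P. gen num app k x n \<noteq> None" if P: "is_path (Dnodes num app k) P" for P n
  proof -
    obtain x where "x \<in> P" and "Suc n \<le> length (x ! 0)"
      using path_unbounded[of ?As P "Suc n"] P L ne by (auto simp: Dnodes_def)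
    moreover have "x \<in> Dnodes num app k" using path_subset[OF P] \<open>x \<in> P\<close> by blast
    ultimately show ?thesis using \<open>x \<in> P\<close> gen_at_node[of x num app k n] by auto
  qed
  ultimately show ?thesis unfolding adm_def by blast
qed

lemma vdom_nonempty:
  assumes fu: "full_universe s num app" and v: "var_ok s v"
  shows "vdom num app v \<noteq> {}"
proof -
  obtain st i where vv: "v = V st i" by (cases v)
  show ?thesis
  proof (cases st)
    case SNum thus ?thesis using vv by simp
  next
    case (SFun n)
    thus ?thesis using v vv Adom_nonempty[OF fu, of n] by (auto simp: lvl_ok_def)
  next
    case (SLawlike n)
    then obtain k where k: "n = Suc k" "k < s" using v vv by (cases n) (auto simp: lvl_ok_def)
    then obtain c where "c \<in> Adom num app k" using Adom_nonempty[OF fu, of k] by auto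
    then obtain u where u: "u \<in> Adom num app n"
        "app u = (\<lambda>x n. if x \<in> Dnodes num app k then Some c else None)"
      using full_universe_represents[OF fu k(2) adm_const] k by blast
    have "replicate (Suc k) [] \<in> Dnodes num app k"
      using root_in_Dset[of "Alist num app k"] by (simp add: Dnodes_def length_Alist)
    hence "u \<in> Blaw num app n" using u k by (simp add: Blaw_def)
    thus ?thesis using SLawlike vv by auto
  next
    case (SLawless n)
    then obtain k where k: "n = Suc k" "k < s" using v vv by (cases n) (auto simp: lvl_ok_def)
    obtain u where u: "u \<in> Adom num app n" "app u = gen num app k"
      using full_universe_represents[OF fu k(2) adm_gen[OF levels_nonempty[OF fu]]] k by auto
    have "u \<in> Llaw num app n" unfolding Llaw_def
      using u k by (intro CollectI conjI exI[of _ "\<lambda>m. id"]) (auto simp: gen_def fun_eq_iff)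
    thus ?thesis using SLawless vv by auto
  qed
qed

lemma env_exists:
  assumes "full_universe s num app" "d \<in> vdom num app v"
  shows "\<exists>\<sigma>. env_ok s num app \<sigma> \<and> \<sigma> v = d"
proof -
  define \<sigma> where "\<sigma> = (\<lambda>w. SOME e. e \<in> vdom num app w)(v := d)"
  have "env_ok s num app \<sigma>"
    using vdom_nonempty[OF assms(1)] assms(2) by (auto simp: env_ok_def \<sigma>_def some_in_eq)
  thus ?thesis by (auto simp: \<sigma>_def)
qed

lemma bar_cong:
  assumes "\<forall>\<gamma>\<in>Mnodes s num app. Q \<gamma> = Q' \<gamma>"
  shows "bar s num app \<alpha> Q = bar s num app \<alpha> Q'"
  using assms path_subset unfolding bar_def by blast

lemma bar_here: "Q \<alpha> \<Longrightarrow> bar s num app \<alpha> Q"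
  unfolding bar_def using ext_refl by blast

section \<open>The counterexample\<close>

definition F_var :: var where "F_var = V (SFun 1) 0"

definition X_var :: var where "X_var = V SNum 0"

definition markov_fm :: fm where
  "markov_fm = Eq 0 (Ap 1 (Var F_var) (Var X_var)) (Sc Zero)"

definition hit :: "(nat \<Rightarrow> 'u) \<Rightarrow> 'u list list \<Rightarrow> nat \<Rightarrow> bool" where
  "hit num \<beta> n \<longleftrightarrow> n < length (\<beta> ! 0) \<and> \<beta> ! 0 ! n = num 1"

locale generic_env =
  fixes s :: nat and num :: "nat \<Rightarrow> 'u" and app :: "'u \<Rightarrow> 'u list list \<Rightarrow> nat \<Rightarrow> 'u option"
    and \<sigma> :: "var \<Rightarrow> 'u"
  assumes one_le_s: "1 \<le> s"
    and full: "full_universe s num app"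
    and F_generic: "app (\<sigma> F_var) = gen num app 0"
begin

abbreviation "As \<equiv> Alist num app (s - 1)"

lemma Mnodes_eq: "Mnodes s num app = Dset As"
  by (simp add: Mnodes_def Dnodes_def)

lemma length_As: "length As = s"
  using one_le_s by (simp add: length_Alist)

lemma As_pos: "0 < length As"
  using one_le_s length_As by simp

lemma As_nonempty: "\<forall>i<length As. As ! i \<noteq> {}"
  using levels_nonempty[OF full] by simp

lemma As_0: "As ! 0 = range num"
  by (simp add: Alist_nth Adom_def)

lemma root_eq: "root s = replicate (length As) []"
  using length_As by (simp add: root_def)

lemma root_in_Mnodes: "root s \<in> Mnodes s num app"
  by (simp add: Mnodes_eq root_eq root_in_Dset)

lemma ext_root: "\<beta> \<in> Mnodes s num app \<Longrightarrow> ext \<beta> (root s)"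
  by (auto simp: Mnodes_eq root_eq Dset_def ext_def)

text \<open>At a node, \<open>F(n)\<close> evaluates to the \<open>n\<close>-th entry of the first coordinate, so the atom
  \<open>F(n) = 1\<close> holds there iff the node records a 1 at position \<open>n\<close>.\<close>
lemma markov_fm_iff:
  "frc s num app markov_fm \<beta> (\<sigma>(X_var := num n)) \<longleftrightarrow> bar s num app \<beta> (\<lambda>\<gamma>. hit num \<gamma> n)"
proof -
  have inj: "inj num" using full by (simp add: full_universe_def)
  have "ev num app \<gamma> (\<sigma>(X_var := num n)) (Ap 1 (Var F_var) (Var X_var)) =
      (if n < length (\<gamma> ! 0) then Some (\<gamma> ! 0 ! n) else None)"
    if "\<gamma> \<in> Mnodes s num app" for \<gamma>
  proof -
    have "length \<gamma> = s" using that length_As by (simp add: Mnodes_eq Dset_def)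
    hence tk: "take 1 \<gamma> = [\<gamma> ! 0]" using one_le_s by (cases \<gamma>) auto
    have "set (\<gamma> ! 0) \<subseteq> range num" using Dset_coord[of \<gamma> As 0] that As_pos As_0 by (simp add: Mnodes_eq)
    hence "take 1 \<gamma> \<in> Dnodes num app 0" using tk by (simp add: Dnodes_def Dset_def)
    thus ?thesis using F_generic inj tk by (simp add: F_var_def X_var_def gen_at_node)
  qed
  moreover have "ev num app \<gamma> (\<sigma>(X_var := num n)) (Sc Zero) = Some (num 1)" for \<gamma>
    using inj by simp
  ultimately show ?thesis
    unfolding markov_fm_def frc.simps by (intro bar_cong) (auto simp: hit_def inj_eq[OF inj])
qed

lemma hit_stable:
  assumes "\<beta> \<in> Mnodes s num app" "n < length (\<beta> ! 0)" "ext \<gamma> \<beta>"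
  shows "hit num \<gamma> n = hit num \<beta> n"
proof -
  have "prefix (\<beta> ! 0) (\<gamma> ! 0)" using assms As_pos by (auto simp: ext_def Mnodes_eq Dset_def)
  thus ?thesis using assms(2) prefix_nth prefix_length_le unfolding hit_def
    by (metis order_less_le_trans)
qed

lemma markov_fm_decided:
  assumes \<beta>: "\<beta> \<in> Mnodes s num app" "n < length (\<beta> ! 0)"
    and \<gamma>: "\<gamma> \<in> Mnodes s num app" "ext \<gamma> \<beta>"
  shows "frc s num app markov_fm \<gamma> (\<sigma>(X_var := num n)) \<longleftrightarrow> hit num \<beta> n"
proof
  assume "hit num \<beta> n"
  hence "hit num \<gamma> n" using hit_stable[OF \<beta> \<gamma>(2)] by simp
  thus "frc s num app markov_fm \<gamma> (\<sigma>(X_var := num n))"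
    unfolding markov_fm_iff by (rule bar_here)
next
  assume "frc s num app markov_fm \<gamma> (\<sigma>(X_var := num n))"
  moreover obtain P where P: "is_path (Mnodes s num app) P" "\<gamma> \<in> P"
    using exists_path[of \<gamma> As] \<gamma>(1) As_pos As_nonempty by (auto simp: Mnodes_eq)
  ultimately obtain \<delta> where "ext \<delta> \<gamma>" "hit num \<delta> n"
    unfolding markov_fm_iff bar_def by blast
  thus "hit num \<beta> n" using hit_stable[OF \<beta> ext_trans[OF _ \<gamma>(2)]] by blast
qed

text \<open>Decidability: every path reaches a node of length \<open>> n\<close>, which decides \<open>F(n) = 1\<close>.\<close>
lemma markov_decidable:
  "frc s num app (All X_var (Disj markov_fm (Neg markov_fm))) (root s) \<sigma>"
proof -
  have "bar s num app (root s) (\<lambda>\<beta>. frc s num app markov_fm \<beta> (\<sigma>(X_var := num n)) \<or>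
                                     frc s num app (Neg markov_fm) \<beta> (\<sigma>(X_var := num n)))" for n
    unfolding bar_def
  proof (intro allI impI)
    fix P assume P: "is_path (Mnodes s num app) P \<and> root s \<in> P"
    then obtain \<beta> where \<beta>: "\<beta> \<in> P" "n < length (\<beta> ! 0)"
      using path_unbounded[of As P "Suc n"] As_pos As_nonempty by (auto simp: Mnodes_eq Suc_le_eq)
    have \<beta>M: "\<beta> \<in> Mnodes s num app" using P \<beta>(1) path_subset by blast
    have "frc s num app markov_fm \<beta> (\<sigma>(X_var := num n)) \<or>
          frc s num app (Neg markov_fm) \<beta> (\<sigma>(X_var := num n))"
      using markov_fm_decided[OF \<beta>M \<beta>(2)] \<beta>M ext_refl by (auto simp: Neg_def)
    thus "\<exists>\<beta>\<in>P. ext \<beta> (root s) \<and> (frc s num app markov_fm \<beta> (\<sigma>(X_var := num n)) \<or>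
                   frc s num app (Neg markov_fm) \<beta> (\<sigma>(X_var := num n)))"
      using \<beta>(1) ext_root[OF \<beta>M] by blast
  qed
  thus ?thesis by (simp add: X_var_def)
qed

text \<open>Double negation: any node extends by appending a 1 to its first coordinate, and the
  resulting node forces \<open>F(n) = 1\<close> for \<open>n\<close> the old length.\<close>
lemma markov_not_not_exists: "frc s num app (Neg (Neg (Ex X_var markov_fm))) (root s) \<sigma>"
proof -
  have "\<exists>\<gamma>\<in>Mnodes s num app. ext \<gamma> \<beta> \<and> frc s num app (Ex X_var markov_fm) \<gamma> \<sigma>"
    if \<beta>: "\<beta> \<in> Mnodes s num app" for \<beta>
  proof -
    define c where "c = (pick As)(0 := num 1)"
    have c: "\<forall>i<length As. c i \<in> As ! i" using pick[OF As_nonempty] As_0 by (simp add: c_def)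
    let ?\<gamma> = "extnode \<beta> c"
    note E = extnode[OF \<beta>[unfolded Mnodes_eq] c]
    have "c 0 = num 1" by (simp add: c_def)
    hence "hit num ?\<gamma> (length (\<beta> ! 0))" using E(3)[OF As_pos] by (simp add: hit_def)
    hence "frc s num app markov_fm ?\<gamma> (\<sigma>(X_var := num (length (\<beta> ! 0))))"
      unfolding markov_fm_iff by (rule bar_here)
    hence "\<exists>d\<in>vdom num app X_var. frc s num app markov_fm ?\<gamma> (\<sigma>(X_var := d))"
      by (auto simp: X_var_def)
    hence "frc s num app (Ex X_var markov_fm) ?\<gamma> \<sigma>"
      unfolding frc.simps by (rule bar_here)
    thus ?thesis using E(1,2) by (auto simp: Mnodes_eq)
  qed
  thus ?thesis by (auto simp: Neg_def)
qed

text \<open>No witness at the root: along the path of constant-0 first coordinates no 1 is ever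
  recorded.\<close>
lemma markov_not_exists: "\<not> frc s num app (Ex X_var markov_fm) (root s) \<sigma>"
proof
  define W where "W = (\<lambda>i (j::nat). if i = 0 then num 0 else pick As i)"
  have W: "\<forall>i<length As. \<forall>j. W i j \<in> As ! i" using pick[OF As_nonempty] As_0 by (simp add: W_def)
  let ?Z = "range (nodeseq (length As) W)"
  have Z: "is_path (Mnodes s num app) ?Z" using nodeseq_path[OF As_pos W] by (simp add: Mnodes_eq)
  have "nodeseq (length As) W 0 = root s" by (simp add: nodeseq_def root_eq map_replicate_const)
  hence rZ: "root s \<in> ?Z" by (metis rangeI)
  have no_hit: "\<not> hit num \<delta> n" if "\<delta> \<in> ?Z" for \<delta> n
    using that full As_pos unfolding hit_def nodeseq_def W_def full_universe_def
    by (auto simp: inj_eq)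
  assume "frc s num app (Ex X_var markov_fm) (root s) \<sigma>"
  hence "\<exists>\<beta>\<in>?Z. \<exists>d\<in>vdom num app X_var. frc s num app markov_fm \<beta> (\<sigma>(X_var := d))"
    using Z rZ unfolding frc.simps bar_def by blast
  then obtain \<beta> n where \<beta>: "\<beta> \<in> ?Z" "frc s num app markov_fm \<beta> (\<sigma>(X_var := num n))"
    by (auto simp: X_var_def)
  then obtain \<delta> where "\<delta> \<in> ?Z" "hit num \<delta> n"
    using Z unfolding markov_fm_iff bar_def by blast
  thus False using no_hit by blast
qed

end

lemma generic_env_exists:
  assumes "1 \<le> s" "full_universe s num app"
  shows "\<exists>\<sigma>. env_ok s num app \<sigma> \<and> generic_env s num app \<sigma>"
proof -
  obtain g where g: "g \<in> Adom num app 1" "app g = gen num app 0"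
    using full_universe_represents[OF assms(2) _ adm_gen[OF levels_nonempty[OF assms(2)]]] assms(1)
    by fastforce
  then obtain \<sigma> where "env_ok s num app \<sigma>" "\<sigma> F_var = g"
    using env_exists[OF assms(2), of g F_var] by (auto simp: F_var_def)
  thus ?thesis using assms g by (auto simp: generic_env_def)
qed

theorem theorem11p3:
  fixes s :: nat
    and num :: "nat \<Rightarrow> 'u"
    and app :: "'u \<Rightarrow> 'u list list \<Rightarrow> nat \<Rightarrow> 'u option"
  assumes "1 \<le> s"
    and "full_universe s num app"
  shows "\<exists>\<phi> x \<sigma>. wf_fm s \<phi> \<and> env_ok s num app \<sigma> \<and>
     frc s num app (All (V SNum x) (Disj \<phi> (Neg \<phi>))) (root s) \<sigma> \<and>
     frc s num app (Neg (Neg (Ex (V SNum x) \<phi>))) (root s) \<sigma> \<and>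
     \<not> frc s num app (Ex (V SNum x) \<phi>) (root s) \<sigma> \<and>
     \<not> frc s num app
         (Imp (Conj (All (V SNum x) (Disj \<phi> (Neg \<phi>))) (Neg (Neg (Ex (V SNum x) \<phi>))))
              (Ex (V SNum x) \<phi>)) (root s) \<sigma>"
proof -
  obtain \<sigma> where env: "env_ok s num app \<sigma>" and model: "generic_env s num app \<sigma>"
    using generic_env_exists[OF assms] by blast
  interpret generic_env s num app \<sigma> by (rule model)
  have wf: "wf_fm s markov_fm"
    using assms(1) by (simp add: markov_fm_def F_var_def X_var_def lvl_ok_def)
  have "\<not> frc s num app (Imp (Conj (All X_var (Disj markov_fm (Neg markov_fm)))
            (Neg (Neg (Ex X_var markov_fm)))) (Ex X_var markov_fm)) (root s) \<sigma>"
    using markov_decidable markov_not_not_exists markov_not_exists root_in_Mnodes ext_refl by auto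
  thus ?thesis
    using wf env markov_decidable markov_not_not_exists markov_not_exists
    unfolding X_var_def by blast
qed

end
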